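(* Consider the system of $N$ symplectic point vortices in $\mathbb R^{2m}=\mathbb C^m$: the Hamiltonian system on $(\mathbb R^{2m})^N$ with coordinates $x_{j,\alpha},y_{j,\alpha}$ ($1\le j\le N$, $1\le\alpha\le m$), Poisson bracket $$\{f,g\}=\sum_{j=1}^N\frac1{\Gamma_j}\sum_{\alpha=1}^m\Big(\frac{\partial f}{\partial x_{j,\alpha}}\frac{\partial g}{\partial y_{j,\alpha}}-\frac{\partial f}{\partial y_{j,\alpha}}\frac{\partial g}{\partial x_{j,\alpha}}\Big)$$ and Hamiltonian $\mathcal H=2C(2m)\sum_{j<k}\Gamma_j\Gamma_k|\tilde z_j-\tilde z_k|^{2-2m}$ for $m>1$ (resp. $\mathcal H=-\frac1{4\pi}\sum_{j<k}\Gamma_j\Gamma_k\ln|\tilde z_j-\tilde z_k|^2$ for $m=1$). This system is invariant with respect to the group $E(2m)=U(m)\ltimes\mathbb R^{2m}$ of unitary motions of $\mathbb R^{2m}=\mathbb C^m$ (acting diagonally on all vortices). The corresponding $m^2+2m$ conserved quantities, which Poisson commute with $\mathcal H$, are $$Q_\alpha=\sum_{j=1}^N\Gamma_jx_{j,\alpha},\quad P_\alpha=\sum_{j=1}^N\Gamma_jy_{j,\alpha}\quad(1\le\alpha\le m),$$ $$F^+_{\alpha\beta}=\sum_{j=1}^N\Gamma_j(x_{j,\alpha}x_{j,\beta}+y_{j,\alpha}y_{j,\beta})\quad(1\le\alpha\le\beta\le m),$$ $$F^-_{\alpha\beta}=\sum_{j=1}^N\Gamma_j(x_{j,\alpha}y_{j,\beta}-x_{j,\beta}y_{j,\alpha})\quad(1\le\alpha<\beta\le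 m).$$
   Context: $\tilde z_j=(x_{j,1},\dots,x_{j,m},y_{j,1},\dots,y_{j,m})\in\mathbb R^{2m}$ is the position of the $j$-th vortex, identified with $(z_{j,1},\dots,z_{j,m})\in\mathbb C^m$ via $z_{j,\alpha}=x_{j,\alpha}+iy_{j,\alpha}$; $\Gamma_j\neq0$ are real vortex strengths; $|\cdot|$ is the Euclidean norm; $C(2m)$ is the constant with $\Delta(C(2m)|\tilde z|^{2-2m})=\delta$ in $\mathbb R^{2m}$. The equations of motion are $\Gamma_j\dot x_{j,\alpha}=\partial\mathcal H/\partial y_{j,\alpha}$, $\Gamma_j\dot y_{j,\alpha}=-\partial\mathcal H/\partial x_{j,\alpha}$. *)

theory Defs
  imports "HOL-Analysis.Analysis"
begin

text \<open>A configuration of N vortices in C^m is z :: nat => nat => complex, with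
  z j alpha = x_{j,alpha} + i y_{j,alpha}, for 1 <= j <= N, 1 <= alpha <= m.\<close>

type_synonym config = "nat \<Rightarrow> nat \<Rightarrow> complex"

text \<open>C(n): the constant with Laplacian of C(n)|z|^(2-n) equal to delta in R^n (n >= 3),
  i.e. C(n) = -1/((n-2) |S^(n-1)|), with |S^(n-1)| = 2 pi^(n/2) / Gamma(n/2).
  For n = 2m: C(2m) = - Gamma m / (4 (m-1) pi^m).\<close>
definition Cconst :: "nat \<Rightarrow> real" where
  "Cconst n = - 1 / ((real n - 2) * (2 * pi powr (real n / 2) / Gamma (real n / 2)))"

definition dist2 :: "nat \<Rightarrow> config \<Rightarrow> nat \<Rightarrow> nat \<Rightarrow> real" where
  "dist2 m z j k = (\<Sum>\<alpha>=1..m. (cmod (z j \<alpha> - z k \<alpha>))\<^sup>2)"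

definition vortexH :: "nat \<Rightarrow> nat \<Rightarrow> (nat \<Rightarrow> real) \<Rightarrow> config \<Rightarrow> real" where
  "vortexH m N \<Gamma> z =
     (if m = 1 then
        - (1 / (4 * pi)) * (\<Sum>j=1..N. \<Sum>k=j+1..N. \<Gamma> j * \<Gamma> k * ln (dist2 m z j k))
      else
        2 * Cconst (2 * m) *
          (\<Sum>j=1..N. \<Sum>k=j+1..N. \<Gamma> j * \<Gamma> k * (sqrt (dist2 m z j k)) powr (2 - 2 * real m)))"

definition dX :: "(config \<Rightarrow> real) \<Rightarrow> config \<Rightarrow> nat \<Rightarrow> nat \<Rightarrow> real" where
  "dX f z j \<alpha> = deriv (\<lambda>t. f (z(j := (z j)(\<alpha> := Complex t (Im (z j \<alpha>)))))) (Re (z j \<alpha>))"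

definition dY :: "(config \<Rightarrow> real) \<Rightarrow> config \<Rightarrow> nat \<Rightarrow> nat \<Rightarrow> real" where
  "dY f z j \<alpha> = deriv (\<lambda>t. f (z(j := (z j)(\<alpha> := Complex (Re (z j \<alpha>)) t)))) (Im (z j \<alpha>))"

definition poisson :: "nat \<Rightarrow> nat \<Rightarrow> (nat \<Rightarrow> real) \<Rightarrow> (config \<Rightarrow> real) \<Rightarrow> (config \<Rightarrow> real) \<Rightarrow> config \<Rightarrow> real" where
  "poisson m N \<Gamma> f g z =
     (\<Sum>j=1..N. (1 / \<Gamma> j) * (\<Sum>\<alpha>=1..m. dX f z j \<alpha> * dY g z j \<alpha> - dY f z j \<alpha> * dX g z j \<alpha>))"

definition Qc :: "nat \<Rightarrow> (nat \<Rightarrow> real) \<Rightarrow> nat \<Rightarrow> config \<Rightarrow> real" where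
  "Qc N \<Gamma> \<alpha> z = (\<Sum>j=1..N. \<Gamma> j * Re (z j \<alpha>))"

definition Pc :: "nat \<Rightarrow> (nat \<Rightarrow> real) \<Rightarrow> nat \<Rightarrow> config \<Rightarrow> real" where
  "Pc N \<Gamma> \<alpha> z = (\<Sum>j=1..N. \<Gamma> j * Im (z j \<alpha>))"

definition Fplus :: "nat \<Rightarrow> (nat \<Rightarrow> real) \<Rightarrow> nat \<Rightarrow> nat \<Rightarrow> config \<Rightarrow> real" where
  "Fplus N \<Gamma> \<alpha> \<beta> z = (\<Sum>j=1..N. \<Gamma> j *
      (Re (z j \<alpha>) * Re (z j \<beta>) + Im (z j \<alpha>) * Im (z j \<beta>)))"

definition Fminus :: "nat \<Rightarrow> (nat \<Rightarrow> real) \<Rightarrow> nat \<Rightarrow> nat \<Rightarrow> config \<Rightarrow> real" where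
  "Fminus N \<Gamma> \<alpha> \<beta> z = (\<Sum>j=1..N. \<Gamma> j *
      (Re (z j \<alpha>) * Im (z j \<beta>) - Re (z j \<beta>) * Im (z j \<alpha>)))"

definition noncollision :: "nat \<Rightarrow> nat \<Rightarrow> config \<Rightarrow> bool" where
  "noncollision m N z \<longleftrightarrow>
     (\<forall>j\<in>{1..N}. \<forall>k\<in>{1..N}. j \<noteq> k \<longrightarrow> (\<exists>\<alpha>\<in>{1..m}. z j \<alpha> \<noteq> z k \<alpha>))"

definition unitary_mat :: "nat \<Rightarrow> (nat \<Rightarrow> nat \<Rightarrow> complex) \<Rightarrow> bool" where
  "unitary_mat m U \<longleftrightarrow>
     (\<forall>\<alpha>\<in>{1..m}. \<forall>\<beta>\<in>{1..m}.
        (\<Sum>\<gamma>=1..m. cnj (U \<gamma> \<alpha>) * U \<gamma> \<beta>) = (if \<alpha> = \<beta> then 1 else 0))"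

definition motion :: "nat \<Rightarrow> (nat \<Rightarrow> nat \<Rightarrow> complex) \<Rightarrow> (nat \<Rightarrow> complex) \<Rightarrow> config \<Rightarrow> config" where
  "motion m U b z = (\<lambda>j \<alpha>. (\<Sum>\<beta>=1..m. U \<alpha> \<beta> * z j \<beta>) + b \<alpha>)"

end

theory Submission
  imports Defs
begin

text \<open>Each of the quantities is a sum \<open>f = \<Sum>\<^sub>j \<Gamma>\<^sub>j \<phi>(z\<^sub>j)\<close> of a one-vortex function \<open>\<phi>\<close>,
  so the factors \<open>1/\<Gamma>\<^sub>j\<close> of the Poisson bracket cancel. Writing
  \<open>H = \<Sum>\<^sub>a\<^sub><\<^sub>b \<Gamma>\<^sub>a \<Gamma>\<^sub>b G(|z\<^sub>a - z\<^sub>b|\<^sup>2)\<close>, the bracket \<open>{f, H}\<close> becomes a sum over pairs of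
  \<open>2 \<Gamma>\<^sub>a \<Gamma>\<^sub>b G'(|z\<^sub>a - z\<^sub>b|\<^sup>2)\<close> times the rate of change of \<open>|z\<^sub>a - z\<^sub>b|\<^sup>2\<close> along the
  Hamiltonian flow of \<open>f\<close>. For the generators of unitary motions this flow moves all vortices
  by the same infinitesimal unitary motion, so every mutual distance is preserved and the
  bracket vanishes. Invariance of \<open>H\<close> itself is invariance of \<open>|z\<^sub>a - z\<^sub>b|\<close> under
  \<open>z \<mapsto> U z + b\<close>.\<close>

definition set_re :: "(nat \<Rightarrow> complex) \<Rightarrow> nat \<Rightarrow> real \<Rightarrow> nat \<Rightarrow> complex" where
  "set_re w \<alpha> t = w(\<alpha> := Complex t (Im (w \<alpha>)))"

definition set_im :: "(nat \<Rightarrow> complex) \<Rightarrow> nat \<Rightarrow> real \<Rightarrow> nat \<Rightarrow> complex" where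
  "set_im w \<alpha> t = w(\<alpha> := Complex (Re (w \<alpha>)) t)"

lemma set_re_self [simp]: "set_re w \<alpha> (Re (w \<alpha>)) = w"
  by (simp add: set_re_def complex_surj)

lemma set_im_self [simp]: "set_im w \<alpha> (Im (w \<alpha>)) = w"
  by (simp add: set_im_def complex_surj)

lemma Re_set_re: "Re (set_re w \<alpha> t \<gamma>) = (if \<gamma> = \<alpha> then t else Re (w \<gamma>))"
  by (simp add: set_re_def)

lemma Im_set_re [simp]: "Im (set_re w \<alpha> t \<gamma>) = Im (w \<gamma>)"
  by (simp add: set_re_def)

lemma Re_set_im [simp]: "Re (set_im w \<alpha> t \<gamma>) = Re (w \<gamma>)"
  by (simp add: set_im_def)

lemma Im_set_im: "Im (set_im w \<alpha> t \<gamma>) = (if \<gamma> = \<alpha> then t else Im (w \<gamma>))"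
  by (simp add: set_im_def)

lemma dX_set_re: "dX f z j \<alpha> = deriv (\<lambda>t. f (z(j := set_re (z j) \<alpha> t))) (Re (z j \<alpha>))"
  by (simp add: dX_def set_re_def)

lemma dY_set_im: "dY f z j \<alpha> = deriv (\<lambda>t. f (z(j := set_im (z j) \<alpha> t))) (Im (z j \<alpha>))"
  by (simp add: dY_def set_im_def)

definition vortex_partials ::
    "((nat \<Rightarrow> complex) \<Rightarrow> real) \<Rightarrow> ((nat \<Rightarrow> complex) \<Rightarrow> nat \<Rightarrow> real) \<Rightarrow> ((nat \<Rightarrow> complex) \<Rightarrow> nat \<Rightarrow> real) \<Rightarrow> bool"
  where
  "vortex_partials \<phi> \<phi>x \<phi>y \<longleftrightarrow> (\<forall>w \<alpha>.
     ((\<lambda>t. \<phi> (set_re w \<alpha> t)) has_real_derivative \<phi>x w \<alpha>) (at (Re (w \<alpha>))) \<and>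
     ((\<lambda>t. \<phi> (set_im w \<alpha> t)) has_real_derivative \<phi>y w \<alpha>) (at (Im (w \<alpha>))))"

lemma vortex_partials_Re: "vortex_partials (\<lambda>w. Re (w \<alpha>)) (\<lambda>w \<gamma>. if \<alpha> = \<gamma> then 1 else 0) (\<lambda>w \<gamma>. 0)"
  unfolding vortex_partials_def Re_set_re by (auto intro: derivative_eq_intros)

lemma vortex_partials_Im: "vortex_partials (\<lambda>w. Im (w \<alpha>)) (\<lambda>w \<gamma>. 0) (\<lambda>w \<gamma>. if \<alpha> = \<gamma> then 1 else 0)"
  unfolding vortex_partials_def Im_set_im by (auto intro: derivative_eq_intros)

lemma vortex_partials_add:
  assumes "vortex_partials \<phi> \<phi>x \<phi>y" "vortex_partials \<psi> \<psi>x \<psi>y"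
  shows "vortex_partials (\<lambda>w. \<phi> w + \<psi> w) (\<lambda>w \<alpha>. \<phi>x w \<alpha> + \<psi>x w \<alpha>) (\<lambda>w \<alpha>. \<phi>y w \<alpha> + \<psi>y w \<alpha>)"
  using assms unfolding vortex_partials_def by (auto intro: DERIV_add)

lemma vortex_partials_diff:
  assumes "vortex_partials \<phi> \<phi>x \<phi>y" "vortex_partials \<psi> \<psi>x \<psi>y"
  shows "vortex_partials (\<lambda>w. \<phi> w - \<psi> w) (\<lambda>w \<alpha>. \<phi>x w \<alpha> - \<psi>x w \<alpha>) (\<lambda>w \<alpha>. \<phi>y w \<alpha> - \<psi>y w \<alpha>)"
  using assms unfolding vortex_partials_def by (auto intro: DERIV_diff)

lemma vortex_partials_mult:
  assumes "vortex_partials \<phi> \<phi>x \<phi>y" "vortex_partials \<psi> \<psi>x \<psi>y"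
  shows "vortex_partials (\<lambda>w. \<phi> w * \<psi> w)
    (\<lambda>w \<alpha>. \<phi>x w \<alpha> * \<psi> w + \<phi> w * \<psi>x w \<alpha>) (\<lambda>w \<alpha>. \<phi>y w \<alpha> * \<psi> w + \<phi> w * \<psi>y w \<alpha>)"
  unfolding vortex_partials_def
proof (intro allI conjI)
  fix w \<alpha>
  from assms have "((\<lambda>t. \<phi> (set_re w \<alpha> t)) has_real_derivative \<phi>x w \<alpha>) (at (Re (w \<alpha>)))"
    and "((\<lambda>t. \<psi> (set_re w \<alpha> t)) has_real_derivative \<psi>x w \<alpha>) (at (Re (w \<alpha>)))"
    by (simp_all add: vortex_partials_def)
  from DERIV_mult[OF this] show "((\<lambda>t. \<phi> (set_re w \<alpha> t) * \<psi> (set_re w \<alpha> t)) has_real_derivative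
      \<phi>x w \<alpha> * \<psi> w + \<phi> w * \<psi>x w \<alpha>) (at (Re (w \<alpha>)))"
    by (simp add: mult.commute)
  from assms have "((\<lambda>t. \<phi> (set_im w \<alpha> t)) has_real_derivative \<phi>y w \<alpha>) (at (Im (w \<alpha>)))"
    and "((\<lambda>t. \<psi> (set_im w \<alpha> t)) has_real_derivative \<psi>y w \<alpha>) (at (Im (w \<alpha>)))"
    by (simp_all add: vortex_partials_def)
  from DERIV_mult[OF this] show "((\<lambda>t. \<phi> (set_im w \<alpha> t) * \<psi> (set_im w \<alpha> t)) has_real_derivative
      \<phi>y w \<alpha> * \<psi> w + \<phi> w * \<psi>y w \<alpha>) (at (Im (w \<alpha>)))"
    by (simp add: mult.commute)
qed

lemma dX_vortex_sum:
  assumes "vortex_partials \<phi> \<phi>x \<phi>y" "j \<in> {1..N}"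
  shows "dX (\<lambda>z. \<Sum>i=1..N. \<Gamma> i * \<phi> (z i)) z j \<alpha> = \<Gamma> j * \<phi>x (z j) \<alpha>"
proof -
  have "((\<lambda>t. \<Sum>i=1..N. \<Gamma> i * \<phi> ((z(j := set_re (z j) \<alpha> t)) i)) has_real_derivative
      (\<Sum>i=1..N. if i = j then \<Gamma> j * \<phi>x (z j) \<alpha> else 0)) (at (Re (z j \<alpha>)))"
    using assms(1) by (intro DERIV_sum) (auto simp: vortex_partials_def intro: DERIV_cmult)
  then have "dX (\<lambda>z. \<Sum>i=1..N. \<Gamma> i * \<phi> (z i)) z j \<alpha> = (\<Sum>i=1..N. if i = j then \<Gamma> j * \<phi>x (z j) \<alpha> else 0)"
    unfolding dX_set_re by (rule DERIV_imp_deriv)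
  with assms(2) show ?thesis by simp
qed

lemma dY_vortex_sum:
  assumes "vortex_partials \<phi> \<phi>x \<phi>y" "j \<in> {1..N}"
  shows "dY (\<lambda>z. \<Sum>i=1..N. \<Gamma> i * \<phi> (z i)) z j \<alpha> = \<Gamma> j * \<phi>y (z j) \<alpha>"
proof -
  have "((\<lambda>t. \<Sum>i=1..N. \<Gamma> i * \<phi> ((z(j := set_im (z j) \<alpha> t)) i)) has_real_derivative
      (\<Sum>i=1..N. if i = j then \<Gamma> j * \<phi>y (z j) \<alpha> else 0)) (at (Im (z j \<alpha>)))"
    using assms(1) by (intro DERIV_sum) (auto simp: vortex_partials_def intro: DERIV_cmult)
  then have "dY (\<lambda>z. \<Sum>i=1..N. \<Gamma> i * \<phi> (z i)) z j \<alpha> = (\<Sum>i=1..N. if i = j then \<Gamma> j * \<phi>y (z j) \<alpha> else 0)"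
    unfolding dY_set_im by (rule DERIV_imp_deriv)
  with assms(2) show ?thesis by simp
qed

lemma Re_update_set_re:
  "Re ((z(j := set_re (z j) \<alpha> t)) i \<gamma>) = (if i = j \<and> \<gamma> = \<alpha> then t else Re (z i \<gamma>))"
  by (simp add: Re_set_re)

lemma Im_update_set_re: "Im ((z(j := set_re (z j) \<alpha> t)) i \<gamma>) = Im (z i \<gamma>)"
  by simp

lemma Re_update_set_im: "Re ((z(j := set_im (z j) \<alpha> t)) i \<gamma>) = Re (z i \<gamma>)"
  by simp

lemma Im_update_set_im:
  "Im ((z(j := set_im (z j) \<alpha> t)) i \<gamma>) = (if i = j \<and> \<gamma> = \<alpha> then t else Im (z i \<gamma>))"
  by (simp add: Im_set_im)

definition pair_incidence :: "nat \<Rightarrow> nat \<Rightarrow> nat \<Rightarrow> real" where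
  "pair_incidence a b j = (if a = j then 1 else 0) - (if b = j then 1 else 0)"

lemma sum_pair_incidence:
  assumes "a \<in> {1..N}" "b \<in> {1..N}"
  shows "(\<Sum>j=1..N. pair_incidence a b j * h j) = h a - (h b :: real)"
proof -
  have "(\<Sum>j=1..N. pair_incidence a b j * h j)
      = (\<Sum>j=1..N. if a = j then h j else 0) - (\<Sum>j=1..N. if b = j then h j else 0)"
    unfolding sum_subtractf[symmetric] by (intro sum.cong) (auto simp: pair_incidence_def)
  then show ?thesis using assms by simp
qed

lemma has_real_derivative_square_diff:
  assumes "(f has_real_derivative f') (at t)" "(g has_real_derivative g') (at t)"
  shows "((\<lambda>t. (f t - g t)\<^sup>2) has_real_derivative 2 * (f t - g t) * (f' - g')) (at t)"
  using DERIV_power[OF DERIV_diff[OF assms], of 2] by (simp add: algebra_simps)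

lemma dist2_Re_Im: "dist2 m z a b = (\<Sum>\<gamma>=1..m. (Re (z a \<gamma>) - Re (z b \<gamma>))\<^sup>2 + (Im (z a \<gamma>) - Im (z b \<gamma>))\<^sup>2)"
  by (simp add: dist2_def cmod_power2)

lemma has_real_derivative_dist2_set_re:
  assumes "\<alpha> \<in> {1..m}"
  shows "((\<lambda>t. dist2 m (z(j := set_re (z j) \<alpha> t)) a b) has_real_derivative
      2 * (Re (z a \<alpha>) - Re (z b \<alpha>)) * pair_incidence a b j) (at (Re (z j \<alpha>)))"
proof -
  have Re_deriv: "((\<lambda>t. (Re ((z(j := set_re (z j) \<alpha> t)) i \<gamma>))) has_real_derivative
      (if i = j \<and> \<gamma> = \<alpha> then 1 else 0)) (at t0)" for i \<gamma> t0
    unfolding Re_update_set_re by (auto intro: derivative_eq_intros)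
  have "((\<lambda>t. dist2 m (z(j := set_re (z j) \<alpha> t)) a b) has_real_derivative
      (\<Sum>\<gamma>=1..m. 2 * (Re (z a \<gamma>) - Re (z b \<gamma>)) *
         ((if a = j \<and> \<gamma> = \<alpha> then 1 else 0) - (if b = j \<and> \<gamma> = \<alpha> then 1 else 0))
       + 2 * (Im (z a \<gamma>) - Im (z b \<gamma>)) * (0 - 0))) (at (Re (z j \<alpha>)))"
    unfolding dist2_Re_Im Im_update_set_re
    by (rule DERIV_cong, (rule DERIV_sum DERIV_add has_real_derivative_square_diff Re_deriv DERIV_const)+)
      (simp add: Re_update_set_re)
  also have "(\<Sum>\<gamma>=1..m. 2 * (Re (z a \<gamma>) - Re (z b \<gamma>)) *
         ((if a = j \<and> \<gamma> = \<alpha> then 1 else 0) - (if b = j \<and> \<gamma> = \<alpha> then 1 else 0))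
       + 2 * (Im (z a \<gamma>) - Im (z b \<gamma>)) * (0 - 0))
      = (\<Sum>\<gamma>=1..m. if \<gamma> = \<alpha> then 2 * (Re (z a \<alpha>) - Re (z b \<alpha>)) * pair_incidence a b j else 0)"
    by (intro sum.cong) (auto simp: pair_incidence_def)
  also have "\<dots> = 2 * (Re (z a \<alpha>) - Re (z b \<alpha>)) * pair_incidence a b j"
    using assms by simp
  finally show ?thesis .
qed

lemma has_real_derivative_dist2_set_im:
  assumes "\<alpha> \<in> {1..m}"
  shows "((\<lambda>t. dist2 m (z(j := set_im (z j) \<alpha> t)) a b) has_real_derivative
      2 * (Im (z a \<alpha>) - Im (z b \<alpha>)) * pair_incidence a b j) (at (Im (z j \<alpha>)))"
proof -
  have Im_deriv: "((\<lambda>t. (Im ((z(j := set_im (z j) \<alpha> t)) i \<gamma>))) has_real_derivative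
      (if i = j \<and> \<gamma> = \<alpha> then 1 else 0)) (at t0)" for i \<gamma> t0
    unfolding Im_update_set_im by (auto intro: derivative_eq_intros)
  have "((\<lambda>t. dist2 m (z(j := set_im (z j) \<alpha> t)) a b) has_real_derivative
      (\<Sum>\<gamma>=1..m. 2 * (Re (z a \<gamma>) - Re (z b \<gamma>)) * (0 - 0)
       + 2 * (Im (z a \<gamma>) - Im (z b \<gamma>)) *
         ((if a = j \<and> \<gamma> = \<alpha> then 1 else 0) - (if b = j \<and> \<gamma> = \<alpha> then 1 else 0)))) (at (Im (z j \<alpha>)))"
    unfolding dist2_Re_Im Re_update_set_im
    by (rule DERIV_cong, (rule DERIV_sum DERIV_add has_real_derivative_square_diff Im_deriv DERIV_const)+)
      (simp add: Im_update_set_im)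
  also have "(\<Sum>\<gamma>=1..m. 2 * (Re (z a \<gamma>) - Re (z b \<gamma>)) * (0 - 0)
       + 2 * (Im (z a \<gamma>) - Im (z b \<gamma>)) *
         ((if a = j \<and> \<gamma> = \<alpha> then 1 else 0) - (if b = j \<and> \<gamma> = \<alpha> then 1 else 0)))
      = (\<Sum>\<gamma>=1..m. if \<gamma> = \<alpha> then 2 * (Im (z a \<alpha>) - Im (z b \<alpha>)) * pair_incidence a b j else 0)"
    by (intro sum.cong) (auto simp: pair_incidence_def)
  also have "\<dots> = 2 * (Im (z a \<alpha>) - Im (z b \<alpha>)) * pair_incidence a b j"
    using assms by simp
  finally show ?thesis .
qed

definition green :: "nat \<Rightarrow> real \<Rightarrow> real" where
  "green m d = (if m = 1 then - (1 / (4 * pi)) * ln d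
                else 2 * Cconst (2 * m) * sqrt d powr (2 - 2 * real m))"

lemma vortexH_eq_pair_sum:
  "vortexH m N \<Gamma> z = (\<Sum>a=1..N. \<Sum>b=a+1..N. \<Gamma> a * \<Gamma> b * green m (dist2 m z a b))"
  by (cases "m = 1") (simp_all add: vortexH_def green_def sum_distrib_left mult_ac)

lemma green_has_deriv:
  assumes "d > 0"
  shows "(green m has_real_derivative deriv (green m) d) (at d)"
proof -
  have "\<exists>D. (green m has_real_derivative D) (at d)"
  proof (cases "m = 1")
    case True
    then show ?thesis unfolding green_def using assms by (auto intro!: derivative_eq_intros)
  next
    case False
    have "((\<lambda>d. 2 * Cconst (2 * m) * sqrt d powr (2 - 2 * real m)) has_real_derivative
        2 * Cconst (2 * m) * ((2 - 2 * real m) * sqrt d powr ((2 - 2 * real m) - of_nat 1) * (inverse (sqrt d) / 2)))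
        (at d)"
      using assms by (intro DERIV_cmult DERIV_fun_powr DERIV_real_sqrt) auto
    then show ?thesis unfolding green_def using False by auto
  qed
  then show ?thesis using DERIV_imp_deriv by blast
qed

lemma dist2_pos_if_noncollision:
  assumes "noncollision m N z" "a \<in> {1..N}" "b \<in> {1..N}" "a \<noteq> b"
  shows "dist2 m z a b > 0"
proof -
  obtain \<gamma> where \<gamma>: "\<gamma> \<in> {1..m}" "z a \<gamma> \<noteq> z b \<gamma>"
    using assms unfolding noncollision_def by blast
  then have "0 < (cmod (z a \<gamma> - z b \<gamma>))\<^sup>2" by simp
  also have "\<dots> \<le> dist2 m z a b"
    unfolding dist2_def using \<gamma> by (intro member_le_sum) auto
  finally show ?thesis .
qed

definition pair_weight :: "nat \<Rightarrow> (nat \<Rightarrow> real) \<Rightarrow> config \<Rightarrow> nat \<Rightarrow> nat \<Rightarrow> real" where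
  "pair_weight m \<Gamma> z a b = 2 * \<Gamma> a * \<Gamma> b * deriv (green m) (dist2 m z a b)"

lemma dX_vortexH:
  assumes nc: "noncollision m N z" and \<alpha>: "\<alpha> \<in> {1..m}"
  shows "dX (vortexH m N \<Gamma>) z j \<alpha> =
    (\<Sum>a=1..N. \<Sum>b=a+1..N. pair_weight m \<Gamma> z a b * (Re (z a \<alpha>) - Re (z b \<alpha>)) * pair_incidence a b j)"
proof -
  have "((\<lambda>t. vortexH m N \<Gamma> (z(j := set_re (z j) \<alpha> t))) has_real_derivative
      (\<Sum>a=1..N. \<Sum>b=a+1..N. \<Gamma> a * \<Gamma> b * (deriv (green m) (dist2 m (z(j := set_re (z j) \<alpha> (Re (z j \<alpha>)))) a b) *
         (2 * (Re (z a \<alpha>) - Re (z b \<alpha>)) * pair_incidence a b j)))) (at (Re (z j \<alpha>)))"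
    unfolding vortexH_eq_pair_sum
  proof (intro DERIV_sum DERIV_cmult DERIV_chain'[OF has_real_derivative_dist2_set_re[OF \<alpha>]]
      green_has_deriv)
    fix a b assume "a \<in> {1..N}" "b \<in> {a+1..N}"
    then show "0 < dist2 m (z(j := set_re (z j) \<alpha> (Re (z j \<alpha>)))) a b"
      by (simp add: dist2_pos_if_noncollision[OF nc])
  qed
  from DERIV_imp_deriv[OF this] show ?thesis
    unfolding dX_set_re pair_weight_def by (auto intro!: sum.cong simp: algebra_simps)
qed

lemma dY_vortexH:
  assumes nc: "noncollision m N z" and \<alpha>: "\<alpha> \<in> {1..m}"
  shows "dY (vortexH m N \<Gamma>) z j \<alpha> =
    (\<Sum>a=1..N. \<Sum>b=a+1..N. pair_weight m \<Gamma> z a b * (Im (z a \<alpha>) - Im (z b \<alpha>)) * pair_incidence a b j)"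
proof -
  have "((\<lambda>t. vortexH m N \<Gamma> (z(j := set_im (z j) \<alpha> t))) has_real_derivative
      (\<Sum>a=1..N. \<Sum>b=a+1..N. \<Gamma> a * \<Gamma> b * (deriv (green m) (dist2 m (z(j := set_im (z j) \<alpha> (Im (z j \<alpha>)))) a b) *
         (2 * (Im (z a \<alpha>) - Im (z b \<alpha>)) * pair_incidence a b j)))) (at (Im (z j \<alpha>)))"
    unfolding vortexH_eq_pair_sum
  proof (intro DERIV_sum DERIV_cmult DERIV_chain'[OF has_real_derivative_dist2_set_im[OF \<alpha>]]
      green_has_deriv)
    fix a b assume "a \<in> {1..N}" "b \<in> {a+1..N}"
    then show "0 < dist2 m (z(j := set_im (z j) \<alpha> (Im (z j \<alpha>)))) a b"
      by (simp add: dist2_pos_if_noncollision[OF nc])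
  qed
  from DERIV_imp_deriv[OF this] show ?thesis
    unfolding dY_set_im pair_weight_def by (auto intro!: sum.cong simp: algebra_simps)
qed

lemma sum_pairs_pair_incidence:
  "(\<Sum>j=1..N. \<Sum>a=1..N. \<Sum>b=a+1..N. pair_incidence a b j * f j a b)
     = (\<Sum>a=1..N. \<Sum>b=a+1..N. f a a b - (f b a b :: real))"
proof -
  have "(\<Sum>j=1..N. \<Sum>a=1..N. \<Sum>b=a+1..N. pair_incidence a b j * f j a b)
      = (\<Sum>a=1..N. \<Sum>j=1..N. \<Sum>b=a+1..N. pair_incidence a b j * f j a b)"
    by (rule sum.swap)
  also have "\<dots> = (\<Sum>a=1..N. \<Sum>b=a+1..N. \<Sum>j=1..N. pair_incidence a b j * f j a b)"
    by (intro sum.cong refl sum.swap)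
  also have "\<dots> = (\<Sum>a=1..N. \<Sum>b=a+1..N. f a a b - f b a b)"
    by (intro sum.cong refl sum_pair_incidence) auto
  finally show ?thesis .
qed

text \<open>\<open>pair_bracket m \<phi>x \<phi>y v w\<close> is \<open>-1/2\<close> times the derivative of \<open>|v - w|\<^sup>2\<close> along the
  Hamiltonian flow \<open>x' = \<phi>y, y' = -\<phi>x\<close> of the one-vortex function with partials \<open>\<phi>x, \<phi>y\<close>.\<close>

definition pair_bracket ::
    "nat \<Rightarrow> ((nat \<Rightarrow> complex) \<Rightarrow> nat \<Rightarrow> real) \<Rightarrow> ((nat \<Rightarrow> complex) \<Rightarrow> nat \<Rightarrow> real)
      \<Rightarrow> (nat \<Rightarrow> complex) \<Rightarrow> (nat \<Rightarrow> complex) \<Rightarrow> real"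
  where
  "pair_bracket m \<phi>x \<phi>y v w = (\<Sum>\<gamma>=1..m.
     (\<phi>x v \<gamma> - \<phi>x w \<gamma>) * (Im (v \<gamma>) - Im (w \<gamma>)) - (\<phi>y v \<gamma> - \<phi>y w \<gamma>) * (Re (v \<gamma>) - Re (w \<gamma>)))"

lemma poisson_vortex_sum_vortexH:
  assumes \<phi>: "vortex_partials \<phi> \<phi>x \<phi>y" and \<Gamma>: "\<forall>j\<in>{1..N}. \<Gamma> j \<noteq> 0"
    and nc: "noncollision m N z"
  shows "poisson m N \<Gamma> (\<lambda>z. \<Sum>i=1..N. \<Gamma> i * \<phi> (z i)) (vortexH m N \<Gamma>) z
       = (\<Sum>a=1..N. \<Sum>b=a+1..N. pair_weight m \<Gamma> z a b * pair_bracket m \<phi>x \<phi>y (z a) (z b))"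
proof -
  let ?H = "vortexH m N \<Gamma>" and ?W = "pair_weight m \<Gamma> z"
  define h where "h j a b = (\<Sum>\<gamma>=1..m.
     \<phi>x (z j) \<gamma> * (Im (z a \<gamma>) - Im (z b \<gamma>)) - \<phi>y (z j) \<gamma> * (Re (z a \<gamma>) - Re (z b \<gamma>)))" for j a b
  have "poisson m N \<Gamma> (\<lambda>z. \<Sum>i=1..N. \<Gamma> i * \<phi> (z i)) ?H z
      = (\<Sum>j=1..N. \<Sum>\<gamma>=1..m. \<phi>x (z j) \<gamma> * dY ?H z j \<gamma> - \<phi>y (z j) \<gamma> * dX ?H z j \<gamma>)"
    unfolding poisson_def
  proof (rule sum.cong[OF refl])
    fix j assume j: "j \<in> {1..N}"
    with \<Gamma> show "1 / \<Gamma> j * (\<Sum>\<gamma>=1..m. dX (\<lambda>z. \<Sum>i=1..N. \<Gamma> i * \<phi> (z i)) z j \<gamma> * dY ?H z j \<gamma>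
          - dY (\<lambda>z. \<Sum>i=1..N. \<Gamma> i * \<phi> (z i)) z j \<gamma> * dX ?H z j \<gamma>)
        = (\<Sum>\<gamma>=1..m. \<phi>x (z j) \<gamma> * dY ?H z j \<gamma> - \<phi>y (z j) \<gamma> * dX ?H z j \<gamma>)"
      unfolding dX_vortex_sum[OF \<phi> j] dY_vortex_sum[OF \<phi> j]
      by (simp add: mult.assoc right_diff_distrib[symmetric] sum_distrib_left[symmetric])
  qed
  also have "\<dots> = (\<Sum>j=1..N. \<Sum>a=1..N. \<Sum>b=a+1..N. pair_incidence a b j * (?W a b * h j a b))"
  proof (rule sum.cong[OF refl])
    fix j
    have "(\<Sum>\<gamma>=1..m. \<phi>x (z j) \<gamma> * dY ?H z j \<gamma> - \<phi>y (z j) \<gamma> * dX ?H z j \<gamma>)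
        = (\<Sum>\<gamma>=1..m. \<Sum>a=1..N. \<Sum>b=a+1..N. pair_incidence a b j * ?W a b *
             (\<phi>x (z j) \<gamma> * (Im (z a \<gamma>) - Im (z b \<gamma>)) - \<phi>y (z j) \<gamma> * (Re (z a \<gamma>) - Re (z b \<gamma>))))"
      by (intro sum.cong refl)
         (simp add: dX_vortexH[OF nc] dY_vortexH[OF nc] sum_distrib_left sum_subtractf[symmetric]
            algebra_simps)
    also have "\<dots> = (\<Sum>a=1..N. \<Sum>b=a+1..N. \<Sum>\<gamma>=1..m. pair_incidence a b j * ?W a b *
             (\<phi>x (z j) \<gamma> * (Im (z a \<gamma>) - Im (z b \<gamma>)) - \<phi>y (z j) \<gamma> * (Re (z a \<gamma>) - Re (z b \<gamma>))))"
      by (subst sum.swap) (intro sum.cong refl sum.swap)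
    also have "\<dots> = (\<Sum>a=1..N. \<Sum>b=a+1..N. pair_incidence a b j * (?W a b * h j a b))"
      unfolding h_def by (simp add: sum_distrib_left mult.assoc)
    finally show "(\<Sum>\<gamma>=1..m. \<phi>x (z j) \<gamma> * dY ?H z j \<gamma> - \<phi>y (z j) \<gamma> * dX ?H z j \<gamma>)
        = (\<Sum>a=1..N. \<Sum>b=a+1..N. pair_incidence a b j * (?W a b * h j a b))" .
  qed
  also have "\<dots> = (\<Sum>a=1..N. \<Sum>b=a+1..N. ?W a b * (h a a b - h b a b))"
    unfolding sum_pairs_pair_incidence by (simp add: right_diff_distrib)
  also have "\<dots> = (\<Sum>a=1..N. \<Sum>b=a+1..N. ?W a b * pair_bracket m \<phi>x \<phi>y (z a) (z b))"
    unfolding h_def pair_bracket_def sum_subtractf[symmetric]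
    by (intro sum.cong refl arg_cong[where f = "(*) _"]) (simp add: algebra_simps)
  finally show ?thesis .
qed

lemma poisson_vortex_sum_vortexH_eq_0:
  assumes "vortex_partials \<phi> \<phi>x \<phi>y" and "\<And>v w. pair_bracket m \<phi>x \<phi>y v w = 0"
    and "\<forall>j\<in>{1..N}. \<Gamma> j \<noteq> 0" and "noncollision m N z"
  shows "poisson m N \<Gamma> (\<lambda>z. \<Sum>i=1..N. \<Gamma> i * \<phi> (z i)) (vortexH m N \<Gamma>) z = 0"
  using poisson_vortex_sum_vortexH[OF assms(1,3,4)] assms(2) by simp

lemma poisson_Qc_vortexH:
  assumes "\<forall>j\<in>{1..N}. \<Gamma> j \<noteq> 0" and "noncollision m N z"
  shows "poisson m N \<Gamma> (Qc N \<Gamma> \<alpha>) (vortexH m N \<Gamma>) z = 0"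
  unfolding Qc_def[abs_def]
  by (rule poisson_vortex_sum_vortexH_eq_0[OF vortex_partials_Re _ assms]) (simp add: pair_bracket_def)

lemma poisson_Pc_vortexH:
  assumes "\<forall>j\<in>{1..N}. \<Gamma> j \<noteq> 0" and "noncollision m N z"
  shows "poisson m N \<Gamma> (Pc N \<Gamma> \<alpha>) (vortexH m N \<Gamma>) z = 0"
  unfolding Pc_def[abs_def]
  by (rule poisson_vortex_sum_vortexH_eq_0[OF vortex_partials_Im _ assms]) (simp add: pair_bracket_def)

lemma vortex_partials_eqI:
  assumes "vortex_partials \<phi> \<phi>x \<phi>y" "\<phi>x = \<psi>x" "\<phi>y = \<psi>y"
  shows "vortex_partials \<phi> \<psi>x \<psi>y"
  using assms by simp

lemma sum_two_deltas:
  fixes \<alpha> \<beta> m :: nat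
  assumes "\<alpha> \<in> {1..m}" "\<beta> \<in> {1..m}"
  shows "(\<Sum>\<gamma>=1..m. (if \<gamma> = \<alpha> then A else 0) + (if \<gamma> = \<beta> then B else 0)) = A + (B :: real)"
  using assms by (simp add: sum.distrib)

lemma vortex_partials_Fplus_density:
  "vortex_partials (\<lambda>w. Re (w \<alpha>) * Re (w \<beta>) + Im (w \<alpha>) * Im (w \<beta>))
     (\<lambda>w \<gamma>. (if \<gamma> = \<alpha> then Re (w \<beta>) else 0) + (if \<gamma> = \<beta> then Re (w \<alpha>) else 0))
     (\<lambda>w \<gamma>. (if \<gamma> = \<alpha> then Im (w \<beta>) else 0) + (if \<gamma> = \<beta> then Im (w \<alpha>) else 0))"
  by (rule vortex_partials_eqI[OF vortex_partials_add[OF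
        vortex_partials_mult[OF vortex_partials_Re vortex_partials_Re]
        vortex_partials_mult[OF vortex_partials_Im vortex_partials_Im]]]) (auto simp: fun_eq_iff)

lemma vortex_partials_Fminus_density:
  "vortex_partials (\<lambda>w. Re (w \<alpha>) * Im (w \<beta>) - Re (w \<beta>) * Im (w \<alpha>))
     (\<lambda>w \<gamma>. (if \<gamma> = \<alpha> then Im (w \<beta>) else 0) - (if \<gamma> = \<beta> then Im (w \<alpha>) else 0))
     (\<lambda>w \<gamma>. (if \<gamma> = \<beta> then Re (w \<alpha>) else 0) - (if \<gamma> = \<alpha> then Re (w \<beta>) else 0))"
  by (rule vortex_partials_eqI[OF vortex_partials_diff[OF
        vortex_partials_mult[OF vortex_partials_Re vortex_partials_Im]
        vortex_partials_mult[OF vortex_partials_Re vortex_partials_Im]]]) (auto simp: fun_eq_iff)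

lemma pair_bracket_Fplus_density:
  assumes "\<alpha> \<in> {1..m}" "\<beta> \<in> {1..m}"
  shows "pair_bracket m
     (\<lambda>w \<gamma>. (if \<gamma> = \<alpha> then Re (w \<beta>) else 0) + (if \<gamma> = \<beta> then Re (w \<alpha>) else 0))
     (\<lambda>w \<gamma>. (if \<gamma> = \<alpha> then Im (w \<beta>) else 0) + (if \<gamma> = \<beta> then Im (w \<alpha>) else 0)) v w = 0"
proof -
  define X where "X \<gamma> = Re (v \<gamma>) - Re (w \<gamma>)" for \<gamma>
  define Y where "Y \<gamma> = Im (v \<gamma>) - Im (w \<gamma>)" for \<gamma>
  have "pair_bracket m
     (\<lambda>w \<gamma>. (if \<gamma> = \<alpha> then Re (w \<beta>) else 0) + (if \<gamma> = \<beta> then Re (w \<alpha>) else 0))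
     (\<lambda>w \<gamma>. (if \<gamma> = \<alpha> then Im (w \<beta>) else 0) + (if \<gamma> = \<beta> then Im (w \<alpha>) else 0)) v w
    = (\<Sum>\<gamma>=1..m. (if \<gamma> = \<alpha> then X \<beta> * Y \<alpha> - Y \<beta> * X \<alpha> else 0)
                 + (if \<gamma> = \<beta> then X \<alpha> * Y \<beta> - Y \<alpha> * X \<beta> else 0))"
    unfolding pair_bracket_def by (intro sum.cong refl) (auto simp: X_def Y_def algebra_simps)
  also have "\<dots> = 0" using assms by (simp only: sum_two_deltas) simp
  finally show ?thesis .
qed

lemma pair_bracket_Fminus_density:
  assumes "\<alpha> \<in> {1..m}" "\<beta> \<in> {1..m}"
  shows "pair_bracket m
     (\<lambda>w \<gamma>. (if \<gamma> = \<alpha> then Im (w \<beta>) else 0) - (if \<gamma> = \<beta> then Im (w \<alpha>) else 0))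
     (\<lambda>w \<gamma>. (if \<gamma> = \<beta> then Re (w \<alpha>) else 0) - (if \<gamma> = \<alpha> then Re (w \<beta>) else 0)) v w = 0"
proof -
  define X where "X \<gamma> = Re (v \<gamma>) - Re (w \<gamma>)" for \<gamma>
  define Y where "Y \<gamma> = Im (v \<gamma>) - Im (w \<gamma>)" for \<gamma>
  have "pair_bracket m
     (\<lambda>w \<gamma>. (if \<gamma> = \<alpha> then Im (w \<beta>) else 0) - (if \<gamma> = \<beta> then Im (w \<alpha>) else 0))
     (\<lambda>w \<gamma>. (if \<gamma> = \<beta> then Re (w \<alpha>) else 0) - (if \<gamma> = \<alpha> then Re (w \<beta>) else 0)) v w
    = (\<Sum>\<gamma>=1..m. (if \<gamma> = \<alpha> then Y \<beta> * Y \<alpha> + X \<beta> * X \<alpha> else 0)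
                 + (if \<gamma> = \<beta> then - Y \<alpha> * Y \<beta> - X \<alpha> * X \<beta> else 0))"
    unfolding pair_bracket_def by (intro sum.cong refl) (auto simp: X_def Y_def algebra_simps)
  also have "\<dots> = 0" using assms by (simp only: sum_two_deltas) simp
  finally show ?thesis .
qed

lemma poisson_Fplus_vortexH:
  assumes "\<alpha> \<in> {1..m}" "\<beta> \<in> {1..m}" and "\<forall>j\<in>{1..N}. \<Gamma> j \<noteq> 0" and "noncollision m N z"
  shows "poisson m N \<Gamma> (Fplus N \<Gamma> \<alpha> \<beta>) (vortexH m N \<Gamma>) z = 0"
  unfolding Fplus_def[abs_def]
  by (rule poisson_vortex_sum_vortexH_eq_0[OF vortex_partials_Fplus_density
        pair_bracket_Fplus_density[OF assms(1,2)] assms(3,4)])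

lemma poisson_Fminus_vortexH:
  assumes "\<alpha> \<in> {1..m}" "\<beta> \<in> {1..m}" and "\<forall>j\<in>{1..N}. \<Gamma> j \<noteq> 0" and "noncollision m N z"
  shows "poisson m N \<Gamma> (Fminus N \<Gamma> \<alpha> \<beta>) (vortexH m N \<Gamma>) z = 0"
  unfolding Fminus_def[abs_def]
  by (rule poisson_vortex_sum_vortexH_eq_0[OF vortex_partials_Fminus_density
        pair_bracket_Fminus_density[OF assms(1,2)] assms(3,4)])

lemma sum_cmod_sq_unitary_apply:
  assumes u: "unitary_mat m U"
  shows "(\<Sum>\<alpha>=1..m. (cmod (\<Sum>\<beta>=1..m. U \<alpha> \<beta> * w \<beta>))\<^sup>2) = (\<Sum>\<beta>=1..m. (cmod (w \<beta>))\<^sup>2)"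
proof -
  have "complex_of_real (\<Sum>\<alpha>=1..m. (cmod (\<Sum>\<beta>=1..m. U \<alpha> \<beta> * w \<beta>))\<^sup>2)
      = (\<Sum>\<alpha>=1..m. (\<Sum>\<beta>=1..m. U \<alpha> \<beta> * w \<beta>) * cnj (\<Sum>\<gamma>=1..m. U \<alpha> \<gamma> * w \<gamma>))"
    by (simp only: of_real_sum complex_norm_square)
  also have "\<dots> = (\<Sum>\<alpha>=1..m. \<Sum>\<beta>=1..m. \<Sum>\<gamma>=1..m. w \<beta> * cnj (w \<gamma>) * (cnj (U \<alpha> \<gamma>) * U \<alpha> \<beta>))"
    by (simp add: sum_product mult_ac)
  also have "\<dots> = (\<Sum>\<beta>=1..m. \<Sum>\<alpha>=1..m. \<Sum>\<gamma>=1..m. w \<beta> * cnj (w \<gamma>) * (cnj (U \<alpha> \<gamma>) * U \<alpha> \<beta>))"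
    by (rule sum.swap)
  also have "\<dots> = (\<Sum>\<beta>=1..m. \<Sum>\<gamma>=1..m. \<Sum>\<alpha>=1..m. w \<beta> * cnj (w \<gamma>) * (cnj (U \<alpha> \<gamma>) * U \<alpha> \<beta>))"
    by (rule sum.cong[OF refl], rule sum.swap)
  also have "\<dots> = (\<Sum>\<beta>=1..m. \<Sum>\<gamma>=1..m. w \<beta> * cnj (w \<gamma>) * (if \<gamma> = \<beta> then 1 else 0))"
  proof (intro sum.cong refl)
    fix \<beta> \<gamma> assume "\<beta> \<in> {1..m}" "\<gamma> \<in> {1..m}"
    then show "(\<Sum>\<alpha>=1..m. w \<beta> * cnj (w \<gamma>) * (cnj (U \<alpha> \<gamma>) * U \<alpha> \<beta>)) = w \<beta> * cnj (w \<gamma>) * (if \<gamma> = \<beta> then 1 else 0)"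
      using u unfolding unitary_mat_def by (simp add: sum_distrib_left[symmetric])
  qed
  also have "\<dots> = (\<Sum>\<beta>=1..m. w \<beta> * cnj (w \<beta>))"
    by (rule sum.cong[OF refl]) (simp add: if_distrib cong: if_cong)
  also have "\<dots> = complex_of_real (\<Sum>\<beta>=1..m. (cmod (w \<beta>))\<^sup>2)"
    by (simp only: of_real_sum complex_norm_square)
  finally show ?thesis by (simp only: of_real_eq_iff)
qed

lemma dist2_motion:
  assumes u: "unitary_mat m U"
  shows "dist2 m (motion m U b z) j k = dist2 m z j k"
proof -
  have "dist2 m (motion m U b z) j k = (\<Sum>\<alpha>=1..m. (cmod (\<Sum>\<beta>=1..m. U \<alpha> \<beta> * (z j \<beta> - z k \<beta>)))\<^sup>2)"
    unfolding dist2_def motion_def by (simp add: right_diff_distrib sum_subtractf)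
  also have "\<dots> = dist2 m z j k" unfolding dist2_def by (rule sum_cmod_sq_unitary_apply[OF u])
  finally show ?thesis .
qed

lemma vortexH_motion:
  assumes u: "unitary_mat m U"
  shows "vortexH m N \<Gamma> (motion m U b z) = vortexH m N \<Gamma> z"
  unfolding vortexH_eq_pair_sum dist2_motion[OF u] ..

theorem theorem4p2:
  fixes m N :: nat and \<Gamma> :: "nat \<Rightarrow> real"
  assumes "m \<ge> 1"
    and "\<forall>j\<in>{1..N}. \<Gamma> j \<noteq> 0"
  shows "(\<forall>U b z. unitary_mat m U \<longrightarrow> vortexH m N \<Gamma> (motion m U b z) = vortexH m N \<Gamma> z)
       \<and> (\<forall>z. noncollision m N z \<longrightarrow>
            (\<forall>\<alpha>\<in>{1..m}. poisson m N \<Gamma> (Qc N \<Gamma> \<alpha>) (vortexH m N \<Gamma>) z = 0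
                       \<and> poisson m N \<Gamma> (Pc N \<Gamma> \<alpha>) (vortexH m N \<Gamma>) z = 0)
          \<and> (\<forall>\<alpha> \<beta>. 1 \<le> \<alpha> \<and> \<alpha> \<le> \<beta> \<and> \<beta> \<le> m \<longrightarrow>
                poisson m N \<Gamma> (Fplus N \<Gamma> \<alpha> \<beta>) (vortexH m N \<Gamma>) z = 0)
          \<and> (\<forall>\<alpha> \<beta>. 1 \<le> \<alpha> \<and> \<alpha> < \<beta> \<and> \<beta> \<le> m \<longrightarrow>
                poisson m N \<Gamma> (Fminus N \<Gamma> \<alpha> \<beta>) (vortexH m N \<Gamma>) z = 0))"
proof (intro conjI allI impI ballI)
  fix U b z assume "unitary_mat m U"
  then show "vortexH m N \<Gamma> (motion m U b z) = vortexH m N \<Gamma> z" by (rule vortexH_motion)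
next
  fix z \<alpha> assume "noncollision m N z"
  with assms(2) show "poisson m N \<Gamma> (Qc N \<Gamma> \<alpha>) (vortexH m N \<Gamma>) z = 0"
    and "poisson m N \<Gamma> (Pc N \<Gamma> \<alpha>) (vortexH m N \<Gamma>) z = 0"
    by (simp_all add: poisson_Qc_vortexH poisson_Pc_vortexH)
next
  fix z \<alpha> \<beta> assume "noncollision m N z" "1 \<le> \<alpha> \<and> \<alpha> \<le> \<beta> \<and> \<beta> \<le> m"
  with assms(2) show "poisson m N \<Gamma> (Fplus N \<Gamma> \<alpha> \<beta>) (vortexH m N \<Gamma>) z = 0"
    by (intro poisson_Fplus_vortexH) auto
next
  fix z \<alpha> \<beta> assume "noncollision m N z" "1 \<le> \<alpha> \<and> \<alpha> < \<beta> \<and> \<beta> \<le> m"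
  with assms(2) show "poisson m N \<Gamma> (Fminus N \<Gamma> \<alpha> \<beta>) (vortexH m N \<Gamma>) z = 0"
    by (intro poisson_Fminus_vortexH) auto
qed

end
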